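(* A closed reversible reaction network $(X,\mathscr{R})$ is free of cornucopias and abysses if and only if it is conservative.
   Context: A reaction network (RN) $(X,\mathscr{R})$ consists of a finite non-empty set $X$ of species and a finite non-empty set $\mathscr{R}$ of reactions. Each reaction $r$ is given by stoichiometric coefficients $s^-_{xr},s^+_{xr}\in\mathbb{N}_0$. The stoichiometric matrix $S\in\mathbb{Z}^{X\times\mathscr{R}}$ has entries $S_{xr}=s^+_{xr}-s^-_{xr}$. The RN is closed if every reaction $r$ has some $x$ with $S_{xr}<0$ and some $y$ with $S_{yr}>0$. The reverse $\bar r$ of $r$ has $s^-_{x\bar r}=s^+_{xr}$ and $s^+_{x\bar r}=s^-_{xr}$. The RN is reversible if $r\in\mathscr{R}$ implies $\bar r\in\mathscr{R}$. For a real vector $w$: - $w>0$ means $w$ is componentwise non-negative and nonzero; - $w<0$ means $-w>0$; - $w\gg0$ means all entries are positive. A flow $v\in\mathbb{R}^{\mathscr{R}}$ with $v>0$ is a cornucopia if $Sv>0$, and an abyss if $Sv<0$. The RN is conservative if there is $m\in\mathbb{R}^X$ with $m\gg0$ and $m^\top S=0$. *)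

theory Defs
  imports Main "HOL-Analysis.Analysis"
begin

text \<open>A reaction network with finite nonempty species type 'x and finite nonempty
  reaction type 'r; reaction r has reactant coefficients sm x r and product
  coefficients sp x r.\<close>

definition stoich :: "('x \<Rightarrow> 'r \<Rightarrow> nat) \<Rightarrow> ('x \<Rightarrow> 'r \<Rightarrow> nat) \<Rightarrow> 'x \<Rightarrow> 'r \<Rightarrow> int" where
  "stoich sm sp x r = int (sp x r) - int (sm x r)"

definition closed_RN :: "('x \<Rightarrow> 'r \<Rightarrow> nat) \<Rightarrow> ('x \<Rightarrow> 'r \<Rightarrow> nat) \<Rightarrow> bool" where
  "closed_RN sm sp \<longleftrightarrow> (\<forall>r. (\<exists>x. stoich sm sp x r < 0) \<and> (\<exists>y. stoich sm sp y r > 0))"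

definition is_reverse :: "('x \<Rightarrow> 'r \<Rightarrow> nat) \<Rightarrow> ('x \<Rightarrow> 'r \<Rightarrow> nat) \<Rightarrow> 'r \<Rightarrow> 'r \<Rightarrow> bool" where
  "is_reverse sm sp r r' \<longleftrightarrow> (\<forall>x. sm x r' = sp x r \<and> sp x r' = sm x r)"

definition reversible_RN :: "('x \<Rightarrow> 'r \<Rightarrow> nat) \<Rightarrow> ('x \<Rightarrow> 'r \<Rightarrow> nat) \<Rightarrow> bool" where
  "reversible_RN sm sp \<longleftrightarrow> (\<forall>r. \<exists>r'. is_reverse sm sp r r')"

definition semipos :: "('a \<Rightarrow> real) \<Rightarrow> bool" where
  "semipos w \<longleftrightarrow> (\<forall>i. w i \<ge> 0) \<and> w \<noteq> (\<lambda>_. 0)"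

definition strictpos :: "('a \<Rightarrow> real) \<Rightarrow> bool" where
  "strictpos w \<longleftrightarrow> (\<forall>i. w i > 0)"

definition Smult :: "('x \<Rightarrow> 'r \<Rightarrow> nat) \<Rightarrow> ('x \<Rightarrow> 'r \<Rightarrow> nat) \<Rightarrow> ('r::finite \<Rightarrow> real) \<Rightarrow> 'x \<Rightarrow> real" where
  "Smult sm sp v x = (\<Sum>r\<in>UNIV. of_int (stoich sm sp x r) * v r)"

definition cornucopia :: "('x \<Rightarrow> 'r \<Rightarrow> nat) \<Rightarrow> ('x \<Rightarrow> 'r \<Rightarrow> nat) \<Rightarrow> ('r::finite \<Rightarrow> real) \<Rightarrow> bool" where
  "cornucopia sm sp v \<longleftrightarrow> semipos v \<and> semipos (Smult sm sp v)"

definition abyss :: "('x \<Rightarrow> 'r \<Rightarrow> nat) \<Rightarrow> ('x \<Rightarrow> 'r \<Rightarrow> nat) \<Rightarrow> ('r::finite \<Rightarrow> real) \<Rightarrow> bool" where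
  "abyss sm sp v \<longleftrightarrow> semipos v \<and> semipos (\<lambda>x. - Smult sm sp v x)"

definition conservative :: "('x::finite \<Rightarrow> 'r \<Rightarrow> nat) \<Rightarrow> ('x \<Rightarrow> 'r \<Rightarrow> nat) \<Rightarrow> bool" where
  "conservative sm sp \<longleftrightarrow> (\<exists>m :: 'x \<Rightarrow> real. strictpos m \<and>
      (\<forall>r. (\<Sum>x\<in>UNIV. m x * of_int (stoich sm sp x r)) = 0))"

end

theory Submission
  imports Defs "HOL-Analysis.Analysis"
begin

text \<open>If \<open>m \<gg> 0\<close> is a conservation law, then \<open>m\<^sup>T S v = 0\<close> for every flow \<open>v\<close>, whereas
  \<open>m\<^sup>T w > 0\<close> for every \<open>w > 0\<close>; so \<open>S v\<close> is never \<open>> 0\<close> or \<open>< 0\<close>. Conversely, by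
  reversibility every vector of the image of \<open>S\<close> is already \<open>S w\<close> for a nonnegative flow
  \<open>w\<close>, so the absence of cornucopias means that the image of \<open>S\<close> misses the standard simplex.
  Separating this compact convex set from the subspace by a hyperplane yields a linear
  functional which vanishes on the image of \<open>S\<close> and is negative on every unit vector; its
  negative is a strictly positive conservation law.\<close>

lemma stoich_reverse:
  assumes "is_reverse sm sp r r'"
  shows "stoich sm sp x r' = - stoich sm sp x r"
  using assms unfolding is_reverse_def stoich_def by simp

lemma sum_weighted_Smult:
  fixes v :: "'r::finite \<Rightarrow> real"
  shows "(\<Sum>x\<in>UNIV. m x * Smult sm sp v x)
           = (\<Sum>r\<in>UNIV. v r * (\<Sum>x\<in>UNIV. m x * of_int (stoich sm sp x r)))"
  unfolding Smult_def sum_distrib_left sum_distrib_right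
  by (subst sum.swap) (simp add: mult_ac)

lemma sum_weighted_semipos_pos:
  fixes m w :: "'x::finite \<Rightarrow> real"
  assumes "strictpos m" and "semipos w"
  shows "0 < (\<Sum>x\<in>UNIV. m x * w x)"
proof -
  from \<open>semipos w\<close> obtain x0 where "w x0 \<noteq> 0"
    unfolding semipos_def by (auto simp: fun_eq_iff)
  with assms have "0 < m x0 * w x0"
    unfolding strictpos_def semipos_def by (simp add: order_less_le)
  with assms show ?thesis
    unfolding strictpos_def semipos_def by (intro sum_pos2[of _ x0]) (auto simp: less_imp_le)
qed

lemma conservative_imp_Smult_not_semipos:
  fixes sm sp :: "'x::finite \<Rightarrow> 'r::finite \<Rightarrow> nat"
  assumes "conservative sm sp"
  shows "\<not> semipos (\<lambda>x. c * Smult sm sp v x)"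
proof
  assume semipos: "semipos (\<lambda>x. c * Smult sm sp v x)"
  from assms obtain m where "strictpos m"
    and law: "\<And>r. (\<Sum>x\<in>UNIV. m x * of_int (stoich sm sp x r)) = 0"
    unfolding conservative_def by blast
  have "(\<Sum>x\<in>UNIV. m x * (c * Smult sm sp v x)) = c * (\<Sum>x\<in>UNIV. m x * Smult sm sp v x)"
    by (simp add: sum_distrib_left mult_ac)
  also have "\<dots> = 0"
    by (simp add: sum_weighted_Smult law)
  finally show False
    using sum_weighted_semipos_pos[OF \<open>strictpos m\<close> semipos] by simp
qed

lemma conservative_imp_no_cornucopia:
  "conservative sm sp \<Longrightarrow> \<not> cornucopia sm sp v"
  using conservative_imp_Smult_not_semipos[of sm sp 1 v] unfolding cornucopia_def by simp

lemma conservative_imp_no_abyss: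
  "conservative sm sp \<Longrightarrow> \<not> abyss sm sp v"
  using conservative_imp_Smult_not_semipos[of sm sp "-1" v] unfolding abyss_def by simp

text \<open>Each negative component of \<open>v\<close> is moved, with flipped sign, to the reverse reaction.\<close>

lemma reversible_Smult_nonneg_flow:
  fixes v :: "'r::finite \<Rightarrow> real"
  assumes "reversible_RN sm sp"
  obtains w where "\<And>r. 0 \<le> w r" and "Smult sm sp w = Smult sm sp v"
proof -
  from assms obtain \<rho> where \<rho>: "\<And>r. is_reverse sm sp r (\<rho> r)"
    unfolding reversible_RN_def by metis
  define w where "w r' = max (v r') 0 + (\<Sum>r | \<rho> r = r'. max (- v r) 0)" for r'
  have "0 \<le> w r" for r
    unfolding w_def by (intro add_nonneg_nonneg sum_nonneg) simp_all
  moreover have "Smult sm sp w x = Smult sm sp v x" for x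
  proof -
    let ?S = "\<lambda>r. real_of_int (stoich sm sp x r)"
    have reverse_part: "(\<Sum>r'\<in>UNIV. ?S r' * (\<Sum>r | \<rho> r = r'. max (- v r) 0))
                   = (\<Sum>r\<in>UNIV. ?S (\<rho> r) * max (- v r) 0)"
    proof -
      have "(\<Sum>r'\<in>UNIV. ?S r' * (\<Sum>r | \<rho> r = r'. max (- v r) 0))
              = (\<Sum>r'\<in>UNIV. \<Sum>r | r \<in> UNIV \<and> \<rho> r = r'. ?S (\<rho> r) * max (- v r) 0)"
        by (simp add: sum_distrib_left)
      also have "\<dots> = (\<Sum>r\<in>UNIV. ?S (\<rho> r) * max (- v r) 0)"
        by (rule sum.group) simp_all
      finally show ?thesis .
    qed
    have "Smult sm sp w x = (\<Sum>r\<in>UNIV. ?S r * max (v r) 0 + ?S (\<rho> r) * max (- v r) 0)"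
      unfolding Smult_def w_def distrib_left sum.distrib reverse_part ..
    also have "\<dots> = (\<Sum>r\<in>UNIV. ?S r * (max (v r) 0 - max (- v r) 0))"
      by (simp add: stoich_reverse[OF \<rho>] algebra_simps)
    also have "\<dots> = Smult sm sp v x"
      unfolding Smult_def by (intro sum.cong) (auto simp: max_def)
    finally show ?thesis .
  qed
  ultimately show ?thesis using that by blast
qed

lemma convex_hull_axes_subset:
  "convex hull (range (\<lambda>i. axis i 1))
     \<subseteq> {y :: real^'n. (\<forall>i. 0 \<le> y $ i) \<and> (\<Sum>i\<in>UNIV. y $ i) = 1}"
proof (rule hull_minimal)
  show "range (\<lambda>i. axis i 1) \<subseteq> {y :: real^'n. (\<forall>i. 0 \<le> y $ i) \<and> (\<Sum>i\<in>UNIV. y $ i) = 1}"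
    by (auto simp: axis_def)
  show "convex {y :: real^'n. (\<forall>i. 0 \<le> y $ i) \<and> (\<Sum>i\<in>UNIV. y $ i) = 1}"
    unfolding convex_def by (auto simp: sum.distrib sum_distrib_left[symmetric])
qed

lemma subspace_inner_bounded_below_eq_0:
  assumes "subspace L" and bounded: "\<And>l. l \<in> L \<Longrightarrow> b < inner a l" and "l \<in> L"
  shows "inner a l = 0"
proof (rule ccontr)
  assume "inner a l \<noteq> 0"
  then have "inner a (((b - 1) / inner a l) *\<^sub>R l) = b - 1"
    by simp
  moreover have "((b - 1) / inner a l) *\<^sub>R l \<in> L"
    using \<open>subspace L\<close> \<open>l \<in> L\<close> by (rule subspace_scale)
  ultimately show False
    using bounded by fastforce
qed

text \<open>A transposition theorem of Gordan--Stiemke type.\<close>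

lemma subspace_disjoint_simplex_obtains_positive_orthogonal:
  fixes L :: "(real^'n) set"
  assumes "subspace L" and "L \<inter> convex hull (range (\<lambda>i. axis i 1)) = {}"
  obtains m where "\<And>i. 0 < m $ i" and "\<And>l. l \<in> L \<Longrightarrow> inner m l = 0"
proof -
  let ?K = "convex hull (range (\<lambda>i. axis i (1::real)) :: (real^'n) set)"
  have "?K \<inter> L = {}"
    using assms(2) by blast
  then have "\<exists>a b. (\<forall>k\<in>?K. inner a k < b) \<and> (\<forall>l\<in>L. b < inner a l)"
    using \<open>subspace L\<close>
    by (intro separating_hyperplane_compact_closed)
      (simp_all add: finite_imp_compact_convex_hull subspace_imp_convex closed_subspace)
  then obtain a b where below: "\<And>k. k \<in> ?K \<Longrightarrow> inner a k < b"
    and above: "\<And>l. l \<in> L \<Longrightarrow> b < inner a l"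
    by blast
  have "b < 0"
    using above[of 0] subspace_0[OF \<open>subspace L\<close>] by simp
  have "0 < (- a) $ i" for i
    using below[of "axis i 1"] \<open>b < 0\<close> by (simp add: hull_inc inner_axis)
  moreover have "inner (- a) l = 0" if "l \<in> L" for l
    using subspace_inner_bounded_below_eq_0[OF \<open>subspace L\<close> above that] by simp
  ultimately show ?thesis
    using that by blast
qed

definition stoich_map :: "('x \<Rightarrow> 'r \<Rightarrow> nat) \<Rightarrow> ('x \<Rightarrow> 'r \<Rightarrow> nat) \<Rightarrow> real^'r \<Rightarrow> real^'x"
  where "stoich_map sm sp v = (\<chi> x. Smult sm sp (($) v) x)"

lemma linear_stoich_map: "linear (stoich_map sm sp)"
  unfolding linear_iff stoich_map_def Smult_def
  by (auto simp: vec_eq_iff sum.distrib sum_distrib_left algebra_simps)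

lemma stoich_map_axis: "stoich_map sm sp (axis r 1) $ x = of_int (stoich sm sp x r)"
  unfolding stoich_map_def Smult_def by (simp add: axis_def if_distrib cong: if_cong)

lemma no_cornucopia_imp_stoich_map_disjoint_simplex:
  fixes sm sp :: "'x::finite \<Rightarrow> 'r::finite \<Rightarrow> nat"
  assumes "reversible_RN sm sp" and "\<nexists>v. cornucopia sm sp v"
  shows "range (stoich_map sm sp) \<inter> convex hull (range (\<lambda>i. axis i 1)) = {}"
proof (rule ccontr)
  assume "range (stoich_map sm sp) \<inter> convex hull (range (\<lambda>i. axis i 1)) \<noteq> {}"
  then obtain v and y :: "real^'x" where y: "y = stoich_map sm sp v"
    and nonneg: "\<And>i. 0 \<le> y $ i" and sum1: "(\<Sum>i\<in>UNIV. y $ i) = 1"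
    using convex_hull_axes_subset by blast
  obtain w where "\<And>r. 0 \<le> w r" and Sw: "Smult sm sp w = Smult sm sp (($) v)"
    using reversible_Smult_nonneg_flow[OF assms(1)] by blast
  have Sw_y: "Smult sm sp w = ($) y"
    unfolding Sw y stoich_map_def by (simp add: fun_eq_iff)
  have "($) y \<noteq> (\<lambda>_. 0)"
    using sum1 by auto
  moreover have "w \<noteq> (\<lambda>_. 0)"
    using Sw_y \<open>($) y \<noteq> (\<lambda>_. 0)\<close> unfolding Smult_def by auto
  ultimately have "cornucopia sm sp w"
    unfolding cornucopia_def semipos_def Sw_y using \<open>\<And>r. 0 \<le> w r\<close> nonneg by blast
  with assms(2) show False
    by blast
qed

lemma no_cornucopia_imp_conservative:
  fixes sm sp :: "'x::finite \<Rightarrow> 'r::finite \<Rightarrow> nat"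
  assumes "reversible_RN sm sp" and "\<nexists>v. cornucopia sm sp v"
  shows "conservative sm sp"
proof -
  obtain m :: "real^'x" where pos: "\<And>x. 0 < m $ x"
    and orth: "\<And>l. l \<in> range (stoich_map sm sp) \<Longrightarrow> inner m l = 0"
    using subspace_disjoint_simplex_obtains_positive_orthogonal
      [OF linear_subspace_image[OF linear_stoich_map subspace_UNIV]
          no_cornucopia_imp_stoich_map_disjoint_simplex[OF assms]] by blast
  have "(\<Sum>x\<in>UNIV. m $ x * of_int (stoich sm sp x r)) = 0" for r
    using orth[of "stoich_map sm sp (axis r 1)"] by (simp add: inner_vec_def stoich_map_axis)
  with pos show ?thesis
    unfolding conservative_def strictpos_def by blast
qed

theorem theorem4:
  fixes sm sp :: "'x::finite \<Rightarrow> 'r::finite \<Rightarrow> nat"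
  assumes "closed_RN sm sp"
    and "reversible_RN sm sp"
  shows "((\<nexists>v. cornucopia sm sp v) \<and> (\<nexists>v. abyss sm sp v)) \<longleftrightarrow> conservative sm sp"
  using no_cornucopia_imp_conservative[OF assms(2)]
    conservative_imp_no_cornucopia conservative_imp_no_abyss
  by blast

end
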